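(* Let $X$ be a separable Banach space over $\mathbb{K}\in\{\mathbb{R},\mathbb{C}\}$ and $T\colon X\to X$ a bounded linear operator. If $T$ is densely uniformly Li-Yorke chaotic, then $T$ admits a dense irregular manifold.
   Context: A subset $S\subset X$ with at least two points is uniformly Li-Yorke scrambled for $T$ if there exist sequences $\{p_n\}$, $\{q_n\}$ in $\mathbb{N}$ such that for all distinct $x,y\in S$: $\lim_n\|T^{p_n}x-T^{p_n}y\|=0$ and $\lim_n\|T^{q_n}x-T^{q_n}y\|=\infty$; $T$ is densely uniformly Li-Yorke chaotic if there is a dense, uncountable such set. A vector $x$ is irregular for $T$ if $\liminf_n\|T^nx\|=0$ and $\limsup_n\|T^nx\|=\infty$. An irregular manifold is a vector subspace $Y\subset X$ every non-zero vector of which is irregular for $T$. *)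

theory Defs
  imports "HOL-Analysis.Analysis" "HOL-Library.Liminf_Limsup"
begin

definition unif_LY_scrambled :: "('a::real_normed_vector \<Rightarrow> 'a) \<Rightarrow> 'a set \<Rightarrow> bool" where
  "unif_LY_scrambled T S \<longleftrightarrow>
     (\<exists>x\<in>S. \<exists>y\<in>S. x \<noteq> y) \<and>
     (\<exists>p q :: nat \<Rightarrow> nat.
        \<forall>x\<in>S. \<forall>y\<in>S. x \<noteq> y \<longrightarrow>
          ((\<lambda>n. norm ((T ^^ p n) x - (T ^^ p n) y)) \<longlonglongrightarrow> 0) \<and>
          filterlim (\<lambda>n. norm ((T ^^ q n) x - (T ^^ q n) y)) at_top sequentially)"

definition densely_unif_LY_chaotic :: "('a::real_normed_vector \<Rightarrow> 'a) \<Rightarrow> bool" where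
  "densely_unif_LY_chaotic T \<longleftrightarrow>
     (\<exists>S. uncountable S \<and> closure S = UNIV \<and> unif_LY_scrambled T S)"

definition irregular_vector :: "('a::real_normed_vector \<Rightarrow> 'a) \<Rightarrow> 'a \<Rightarrow> bool" where
  "irregular_vector T x \<longleftrightarrow>
     liminf (\<lambda>n. ereal (norm ((T ^^ n) x))) = 0 \<and>
     limsup (\<lambda>n. ereal (norm ((T ^^ n) x))) = \<infinity>"

definition irregular_manifold :: "('a::real_normed_vector \<Rightarrow> 'a) \<Rightarrow> 'a set \<Rightarrow> bool" where
  "irregular_manifold T Y \<longleftrightarrow> subspace Y \<and> (\<forall>y\<in>Y. y \<noteq> 0 \<longrightarrow> irregular_vector T y)"

text \<open>Complex scalars.  There is no class of complex normed spaces in the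
  distribution, so a complex structure on a real normed space is given by an
  explicit scalar multiplication \<open>sc\<close>.\<close>
definition complex_normed_structure :: "(complex \<Rightarrow> 'a::real_normed_vector \<Rightarrow> 'a) \<Rightarrow> bool" where
  "complex_normed_structure sc \<longleftrightarrow>
     module sc \<and>
     (\<forall>r x. sc (complex_of_real r) x = r *\<^sub>R x) \<and>
     (\<forall>c x. norm (sc c x) = cmod c * norm x)"

definition irregular_manifold_C ::
    "(complex \<Rightarrow> 'a::real_normed_vector \<Rightarrow> 'a) \<Rightarrow> ('a \<Rightarrow> 'a) \<Rightarrow> 'a set \<Rightarrow> bool" where
  "irregular_manifold_C sc T Y \<longleftrightarrow>
     module.subspace sc Y \<and> (\<forall>y\<in>Y. y \<noteq> 0 \<longrightarrow> irregular_vector T y)"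

end

theory Submission
  imports Defs
begin

(* Let p be a sequence along which a dense uniformly scrambled set S is asymptotic.  The
   translates s - x0 (s in S) are dense and satisfy T^(p m) (s - x0) -> 0, and the difference of
   two scrambled points has an unbounded orbit.  A vector is irregular as soon as its iterates
   come arbitrarily close to 0 and its orbit is unbounded, so it suffices to place, near every
   member of a countable dense family of targets, vectors y_k all of whose non-zero linear
   combinations have both properties; their span is the dense irregular manifold.

   If the operators T^(p m) are uniformly bounded, T^(p m) x -> 0 for every x, and only
   unboundedness matters.  The vectors with bounded orbit form a subspace B, and B + span F is
   a proper subspace whenever F is finite and span F meets B only in 0: otherwise the Baire
   category theorem yields a bounded projection P onto span F along B, and since T^(p m) -> 0
   pointwise some P T^N contracts span F, which forces every orbit to be bounded.  So the y_k
   can be chosen one by one outside B + span {y_0, ..., y_(k-1)}.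

   Otherwise T^(p m) has arbitrarily large norm on the dense set of p-null vectors.  Each y_k is
   a p-null vector near its target plus a convergent series of small bumps; the bumps are chosen
   inductively together with times at which every combination built so far is small, and times
   at which a single bump with a large coefficient dominates. *)

section \<open>Orbits and irregular vectors\<close>

definition bounded_orbit :: "('a::real_normed_vector \<Rightarrow> 'a) \<Rightarrow> 'a \<Rightarrow> bool" where
  "bounded_orbit T x \<longleftrightarrow> (\<exists>K. \<forall>n. norm ((T ^^ n) x) \<le> K)"

lemma bounded_linear_funpow:
  fixes T :: "'a::real_normed_vector \<Rightarrow> 'a"
  assumes "bounded_linear T"
  shows "bounded_linear (T ^^ n)"
proof (induction n)
  case 0
  show ?case by (simp add: id_def)
next
  case (Suc n)
  show ?case using bounded_linear_compose[OF assms Suc] by (simp add: comp_def)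
qed

lemma funpow_zero_fixed:
  fixes T :: "'a::zero \<Rightarrow> 'a"
  assumes "T 0 = 0"
  shows "(T ^^ n) 0 = 0"
  by (induction n) (simp_all add: assms)

lemma liminf_orbit_norm_eq_0:
  fixes T :: "'a::real_normed_vector \<Rightarrow> 'a"
  assumes T0: "T 0 = 0" and small: "\<And>e. e > 0 \<Longrightarrow> \<exists>n. norm ((T ^^ n) y) < e"
  shows "liminf (\<lambda>n. ereal (norm ((T ^^ n) y))) = 0"
proof (rule antisym)
  show "0 \<le> liminf (\<lambda>n. ereal (norm ((T ^^ n) y)))"
    by (rule Liminf_bounded) simp
  show "liminf (\<lambda>n. ereal (norm ((T ^^ n) y))) \<le> 0"
  proof (rule ccontr)
    assume "\<not> ?thesis"
    then have "0 < liminf (\<lambda>n. ereal (norm ((T ^^ n) y)))" by (simp add: not_le)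
    then obtain e :: real where e: "0 < ereal e" "ereal e < liminf (\<lambda>n. ereal (norm ((T ^^ n) y)))"
      using ereal_dense2 by blast
    then have "e > 0" by simp
    then obtain N where N: "\<And>n. n \<ge> N \<Longrightarrow> e < norm ((T ^^ n) y)"
      using less_LiminfD[OF e(2)] by (auto simp: eventually_sequentially)
    \<comment> \<open>Since \<open>T\<^sup>N y \<noteq> 0\<close>, no earlier iterate vanishes either.\<close>
    have nonzero: "(T ^^ n) y \<noteq> 0" if "n < N" for n
    proof
      assume "(T ^^ n) y = 0"
      then have "(T ^^ (N - n + n)) y = 0"
        using funpow_zero_fixed[of T "N - n", OF T0] by (simp add: funpow_add)
      then show False using N[of N] that \<open>e > 0\<close> by simp
    qed
    define m where "m = Min (insert e ((\<lambda>n. norm ((T ^^ n) y)) ` {..<N}))"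
    have "m > 0" unfolding m_def using \<open>e > 0\<close> nonzero by (subst Min_gr_iff) auto
    moreover have "m \<le> norm ((T ^^ n) y)" for n
    proof (cases "n < N")
      case True
      then show ?thesis unfolding m_def by (intro Min_le) auto
    next
      case False
      then show ?thesis using N[of n] unfolding m_def by (intro order.trans[OF Min_le]) auto
    qed
    ultimately show False using small by (meson not_le)
  qed
qed

lemma limsup_orbit_norm_eq_infinity:
  fixes T :: "'a::real_normed_vector \<Rightarrow> 'a"
  assumes "\<not> bounded_orbit T y"
  shows "limsup (\<lambda>n. ereal (norm ((T ^^ n) y))) = \<infinity>"
proof (rule ccontr)
  assume "limsup (\<lambda>n. ereal (norm ((T ^^ n) y))) \<noteq> \<infinity>"
  then obtain B :: real where "limsup (\<lambda>n. ereal (norm ((T ^^ n) y))) < ereal B"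
    using less_PInf_Ex_of_nat top.not_eq_extremum by blast
  then obtain N where N: "\<And>n. n \<ge> N \<Longrightarrow> norm ((T ^^ n) y) < B"
    using Limsup_lessD by (fastforce simp: eventually_sequentially)
  have "norm ((T ^^ n) y) \<le> max B (\<Sum>k<N. norm ((T ^^ k) y))" for n
  proof (cases "n < N")
    case True
    then show ?thesis by (intro max.coboundedI2 member_le_sum) auto
  next
    case False
    then show ?thesis using N[of n] by simp
  qed
  then show False using assms unfolding bounded_orbit_def by blast
qed

lemma irregular_vectorI:
  fixes T :: "'a::real_normed_vector \<Rightarrow> 'a"
  assumes "T 0 = 0" and "\<And>e. e > 0 \<Longrightarrow> \<exists>n. norm ((T ^^ n) y) < e" and "\<not> bounded_orbit T y"
  shows "irregular_vector T y"
  unfolding irregular_vector_def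
  using liminf_orbit_norm_eq_0[OF assms(1,2)] limsup_orbit_norm_eq_infinity[OF assms(3)] by blast

lemma closed_null_set_if_uniformly_bounded:
  fixes L :: "nat \<Rightarrow> 'a::real_normed_vector \<Rightarrow> 'b::real_normed_vector"
  assumes lin: "\<And>m. linear (L m)" and bound: "\<And>m x. norm (L m x) \<le> C * norm x"
  shows "closed {x. (\<lambda>m. L m x) \<longlonglongrightarrow> 0}"
proof -
  define C' where "C' = \<bar>C\<bar> + 1"
  have C': "C' > 0" "norm (L m x) \<le> C' * norm x" for m x
    unfolding C'_def using bound[of m x] by (auto intro: order.trans[OF _ mult_right_mono])
  have "(\<lambda>m. L m x) \<longlonglongrightarrow> 0" if x: "x \<in> closure {x. (\<lambda>m. L m x) \<longlonglongrightarrow> 0}" for x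
  proof (rule LIMSEQ_I)
    fix e :: real assume e: "e > 0"
    have "e / (2 * C') > 0" using e C'(1) by simp
    then obtain a where a: "(\<lambda>m. L m a) \<longlonglongrightarrow> 0" "dist a x < e / (2 * C')"
      using x unfolding closure_approachable by blast
    obtain N where N: "\<And>m. m \<ge> N \<Longrightarrow> norm (L m a) < e / 2"
      using LIMSEQ_D[OF a(1), of "e / 2"] e by auto
    have "norm (L m x) < e" if "m \<ge> N" for m
    proof -
      have "L m x = L m a + L m (x - a)" by (simp add: linear_add[OF lin, symmetric])
      then have "norm (L m x) \<le> norm (L m a) + norm (L m (x - a))" by (simp add: norm_triangle_ineq)
      then have "norm (L m x) \<le> norm (L m a) + C' * norm (x - a)"
        using C'(2)[of m "x - a"] by linarith
      also have "C' * norm (x - a) < e / 2"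
        using a(2) C'(1) by (simp add: dist_norm norm_minus_commute field_simps)
      finally show ?thesis using N[OF that] by linarith
    qed
    then show "\<exists>N. \<forall>m\<ge>N. norm (L m x - 0) < e" by auto
  qed
  then show ?thesis unfolding closure_subset_eq[symmetric] by blast
qed

lemma proper_subspace_complement_dense:
  fixes t :: "'a::real_normed_vector"
  assumes "subspace M" and "M \<noteq> UNIV" and "r > 0"
  shows "\<exists>y. y \<notin> M \<and> dist y t < r"
proof (cases "t \<in> M")
  case False
  then show ?thesis using assms(3) by auto
next
  case True
  obtain v where v: "v \<notin> M" using assms(2) by blast
  define s where "s = r / (norm v + 1)"
  have s: "s > 0" "s * norm v < r"
    unfolding s_def using assms(3) by (auto simp: field_simps add_pos_nonneg)
  have "t + s *\<^sub>R v \<notin> M"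
  proof
    assume "t + s *\<^sub>R v \<in> M"
    then have "(1 / s) *\<^sub>R ((t + s *\<^sub>R v) - t) \<in> M"
      using True assms(1) by (intro subspace_mul subspace_diff)
    then show False using v s(1) by simp
  qed
  moreover have "dist (t + s *\<^sub>R v) t < r" using s by (simp add: dist_norm)
  ultimately show ?thesis by blast
qed

lemma dependent_choice_local:
  fixes Q :: "nat \<Rightarrow> (nat \<Rightarrow> 'a) \<Rightarrow> bool"
  assumes local: "\<And>i s s'. Q i s \<Longrightarrow> (\<And>k. k \<le> i \<Longrightarrow> s' k = s k) \<Longrightarrow> Q i s'"
    and step: "\<And>i s. (\<And>k. k < i \<Longrightarrow> Q k s) \<Longrightarrow> \<exists>x. Q i (s(i := x))"
  shows "\<exists>s. \<forall>i. Q i s"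
proof -
  define P where "P n s \<longleftrightarrow> (\<forall>k<n. Q k s)" for n s
  have extend: "\<exists>s'. P (Suc n) s' \<and> (\<forall>k<n. s' k = s k)" if "P n s" for n s
  proof -
    have "Q k s" if "k < n" for k using \<open>P n s\<close> that unfolding P_def by simp
    then obtain x where x: "Q n (s(n := x))" using step by blast
    have "Q k (s(n := x))" if "k < n" for k
      using local[of k s] \<open>P n s\<close> that unfolding P_def by simp
    then have "P (Suc n) (s(n := x))" using x unfolding P_def by (auto simp: less_Suc_eq)
    then show ?thesis by (intro exI[of _ "s(n := x)"]) simp
  qed
  obtain F where F: "\<And>n. P n (F n)" "\<And>n k. k < n \<Longrightarrow> F (Suc n) k = F n k"
    using dependent_nat_choice[of P "\<lambda>n s s'. \<forall>k<n. s' k = s k", OF _ extend]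
    unfolding P_def by blast
  define f where "f k = F (Suc k) k" for k
  have agree: "F n k = f k" if "k < n" for n k
    using that
  proof (induction n)
    case (Suc n)
    then show ?case by (cases "k = n") (simp_all add: f_def F(2))
  qed simp
  have "Q i f" for i
    using local[of i "F (Suc i)" f] F(1)[of "Suc i"] agree[of _ "Suc i"] unfolding P_def by simp
  then show ?thesis by blast
qed

lemma partial_sums_bounded_if_halving:
  fixes a :: "nat \<Rightarrow> real"
  assumes N: "N \<ge> 1" and nonneg: "\<And>n. a n \<ge> 0" and halving: "\<And>n. a (n + N) \<le> a n / 2"
  shows "\<exists>B. \<forall>n. (\<Sum>j<n. a j) \<le> B"
proof -
  define G where "G = (\<Sum>j<N. a j)"
  define \<theta> where "\<theta> = root N (1/2)"
  have G: "G \<ge> 0" unfolding G_def using nonneg by (simp add: sum_nonneg)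
  have \<theta>: "0 < \<theta>" "\<theta> < 1" "\<theta> ^ N = 1/2"
    unfolding \<theta>_def using N by (auto simp: real_root_gt_zero)
  have decay: "a n \<le> 2 * G * \<theta> ^ n" for n
  proof (induction n rule: less_induct)
    case (less n)
    show ?case
    proof (cases "n < N")
      case True
      have "a n \<le> G" unfolding G_def using True nonneg by (intro member_le_sum) auto
      also have "G = 2 * G * \<theta> ^ N" using \<theta>(3) by simp
      also have "\<dots> \<le> 2 * G * \<theta> ^ n" using True \<theta> G by (intro mult_left_mono power_decreasing) auto
      finally show ?thesis .
    next
      case False
      then obtain m where m: "n = m + N" by (metis add.commute le_add_diff_inverse not_less)
      then have "m < n" using N by simp
      have "a n \<le> a m / 2" unfolding m by (rule halving)
      also have "\<dots> \<le> 2 * G * \<theta> ^ m / 2" using less.IH[OF \<open>m < n\<close>] by simp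
      also have "\<dots> = 2 * G * \<theta> ^ n" unfolding m power_add \<theta>(3) by simp
      finally show ?thesis .
    qed
  qed
  have "(\<Sum>j<n. a j) \<le> 2 * G / (1 - \<theta>)" for n
  proof -
    have "(\<Sum>j<n. a j) \<le> (\<Sum>j<n. 2 * G * \<theta> ^ j)" by (intro sum_mono decay)
    also have "\<dots> = 2 * G * ((1 - \<theta> ^ n) / (1 - \<theta>))"
      by (simp add: sum_distrib_left[symmetric] sum_gp_strict \<theta>(2) less_imp_neq)
    also have "\<dots> \<le> 2 * G * (1 / (1 - \<theta>))"
      using \<theta> G by (intro mult_left_mono divide_right_mono) auto
    finally show ?thesis by simp
  qed
  then show ?thesis by blast
qed

lemma geometrically_bounded_series:
  fixes f :: "nat \<Rightarrow> 'a::banach"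
  assumes bound: "\<And>l. norm (f l) \<le> c * (1/2) ^ l"
  shows "summable f" and "norm (suminf f) \<le> 2 * c"
proof -
  have geom: "summable (\<lambda>l. c * (1/2::real) ^ l)" by (intro summable_mult summable_geometric) simp
  have norms: "summable (\<lambda>l. norm (f l))"
    by (rule summable_comparison_test'[OF geom, where N = 0]) (simp add: bound)
  then show "summable f" by (rule summable_norm_cancel)
  have "norm (suminf f) \<le> (\<Sum>l. norm (f l))" by (rule summable_norm[OF norms])
  also have "\<dots> \<le> (\<Sum>l. c * (1/2) ^ l)" by (rule suminf_le[OF bound norms geom])
  also have "\<dots> = 2 * c" by (simp add: suminf_mult suminf_geometric)
  finally show "norm (suminf f) \<le> 2 * c" .
qed

section \<open>Banach spaces over \<open>\<real>\<close> or \<open>\<complex>\<close>\<close>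

text \<open>The scalars \<open>'k\<close> act through \<open>sm\<close>; their local compactness is what makes bounded
  sets of finite linear combinations compact.\<close>

locale banach_over = module sm
  for sm :: "'k::{real_normed_field,heine_borel} \<Rightarrow> 'a::banach \<Rightarrow> 'a" +
  assumes sm_of_real: "\<And>r x. sm (of_real r) x = r *\<^sub>R x"
    and norm_sm: "\<And>c x. norm (sm c x) = norm c * norm x"
begin

lemma real_subspace: "subspace M \<Longrightarrow> real_vector.subspace M"
  unfolding subspace_def real_vector.subspace_def by (metis sm_of_real)

lemma bounded_linear_sm_left: "bounded_linear (\<lambda>c. sm c a)"
proof (rule bounded_linear_intro[of _ "norm a"])
  show "sm (c + d) a = sm c a + sm d a" for c d by (rule scale_left_distrib)
  show "sm (r *\<^sub>R c) a = r *\<^sub>R sm c a" for r c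
    by (simp add: scaleR_conv_of_real sm_of_real[symmetric])
  show "norm (sm c a) \<le> norm c * norm a" for c by (simp add: norm_sm)
qed

lemma norm_sum_sm_le: "norm (\<Sum>f\<in>F. sm (u f) (g f)) \<le> (\<Sum>f\<in>F. norm (u f) * norm (g f))"
  by (rule order_trans[OF norm_sum]) (simp add: norm_sm)

lemma compact_bounded_combinations:
  assumes "finite F"
  shows "compact {(\<Sum>f\<in>F. sm (u f) f) | u. \<forall>f\<in>F. norm (u f) \<le> K}"
  using assms
proof (induction F rule: finite_induct)
  case empty
  have "{(\<Sum>f\<in>{}. sm (u f) f) | u. \<forall>f\<in>{}. norm (u f) \<le> K} = {0}" by auto
  then show ?case by simp
next
  case (insert a F)
  let ?S = "{(\<Sum>f\<in>F. sm (u f) f) | u. \<forall>f\<in>F. norm (u f) \<le> K}"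
  let ?g = "\<lambda>z::'k \<times> 'a. sm (fst z) a + snd z"
  have g: "bounded_linear ?g"
    by (intro bounded_linear_add bounded_linear_compose[OF bounded_linear_sm_left bounded_linear_fst]
        bounded_linear_snd)
  have eq: "{(\<Sum>f\<in>insert a F. sm (u f) f) | u. \<forall>f\<in>insert a F. norm (u f) \<le> K}
      = ?g ` (cball 0 K \<times> ?S)"
  proof (intro equalityI subsetI)
    fix x assume "x \<in> {(\<Sum>f\<in>insert a F. sm (u f) f) | u. \<forall>f\<in>insert a F. norm (u f) \<le> K}"
    then obtain u where u: "x = (\<Sum>f\<in>insert a F. sm (u f) f)" "\<forall>f\<in>insert a F. norm (u f) \<le> K"
      by blast
    have "x = ?g (u a, \<Sum>f\<in>F. sm (u f) f)" using u(1) insert by simp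
    moreover have "(u a, \<Sum>f\<in>F. sm (u f) f) \<in> cball 0 K \<times> ?S" using u(2) by auto
    ultimately show "x \<in> ?g ` (cball 0 K \<times> ?S)" by blast
  next
    fix x assume "x \<in> ?g ` (cball 0 K \<times> ?S)"
    then obtain c u where cu: "norm c \<le> K" "\<forall>f\<in>F. norm (u f) \<le> K"
        "x = sm c a + (\<Sum>f\<in>F. sm (u f) f)"
      by auto
    have "(\<Sum>f\<in>F. sm ((u(a := c)) f) f) = (\<Sum>f\<in>F. sm (u f) f)"
      using insert(2) by (intro sum.cong) auto
    then have "x = (\<Sum>f\<in>insert a F. sm ((u(a := c)) f) f)" using cu(3) insert by simp
    moreover have "\<forall>f\<in>insert a F. norm ((u(a := c)) f) \<le> K" using cu by auto
    ultimately show "x \<in> {(\<Sum>f\<in>insert a F. sm (u f) f) | u. \<forall>f\<in>insert a F. norm (u f) \<le> K}"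
      by blast
  qed
  show ?case
    unfolding eq
    by (intro compact_continuous_image linear_continuous_on[OF g] compact_Times compact_cball insert(3))
qed

lemma span_range_eq_sum:
  assumes "v \<in> span (range y)"
  shows "\<exists>K c. finite K \<and> v = (\<Sum>k\<in>K. sm (c k) (y k))"
proof -
  obtain S u where S: "finite S" "S \<subseteq> range y" "v = (\<Sum>a\<in>S. sm (u a) a)"
    using assms unfolding span_explicit by blast
  define g where "g a = (SOME k. y k = a)" for a
  have yg: "y (g a) = a" if "a \<in> S" for a
    using that S(2) unfolding g_def by (metis (mono_tags, lifting) imageE someI subsetD)
  have "inj_on g S" by (metis inj_onI yg)
  then have "(\<Sum>k\<in>g ` S. sm (u (y k)) (y k)) = (\<Sum>a\<in>S. sm (u (y (g a))) (y (g a)))"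
    by (simp add: sum.reindex comp_def)
  also have "\<dots> = v" using S(3) yg by simp
  finally show ?thesis using S(1) by (intro exI[of _ "g ` S"] exI[of _ "\<lambda>k. u (y k)"]) auto
qed

end

locale operator_over = banach_over sm
  for sm :: "'k::{real_normed_field,heine_borel} \<Rightarrow> 'a::banach \<Rightarrow> 'a" +
  fixes T :: "'a \<Rightarrow> 'a"
  assumes bounded_linear_T: "bounded_linear T"
    and T_sm: "\<And>c x. T (sm c x) = sm c (T x)"
begin

lemma T_zero: "T 0 = 0"
  by (rule linear_simps(3)[OF bounded_linear_T])

lemma bounded_linear_iter: "bounded_linear (T ^^ n)"
  by (rule bounded_linear_funpow[OF bounded_linear_T])

lemmas iter_add = linear_simps(1)[OF bounded_linear_iter]
  and iter_diff = linear_simps(2)[OF bounded_linear_iter]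
  and iter_zero [simp] = linear_simps(3)[OF bounded_linear_iter]
  and iter_scaleR = linear_simps(5)[OF bounded_linear_iter]

lemma iter_sum: "(T ^^ n) (sum g A) = (\<Sum>a\<in>A. (T ^^ n) (g a))"
  by (rule linear_sum[OF bounded_linear.linear[OF bounded_linear_iter]])

lemma iter_sm: "(T ^^ n) (sm c x) = sm c ((T ^^ n) x)"
  by (induction n) (simp_all add: T_sm)

lemma norm_iter_le: "norm ((T ^^ n) x) \<le> onorm (T ^^ n) * norm x"
  by (rule onorm[OF bounded_linear_iter])

lemma continuous_on_iter: "continuous_on S (T ^^ n)"
  by (rule linear_continuous_on[OF bounded_linear_iter])

lemma bounded_orbit_0 [simp]: "bounded_orbit T 0"
  unfolding bounded_orbit_def by auto

lemma bounded_orbit_add: "bounded_orbit T x \<Longrightarrow> bounded_orbit T y \<Longrightarrow> bounded_orbit T (x + y)"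
  unfolding bounded_orbit_def iter_add by (meson add_mono norm_triangle_ineq order_trans)

lemma bounded_orbit_sm: "bounded_orbit T x \<Longrightarrow> bounded_orbit T (sm c x)"
  unfolding bounded_orbit_def iter_sm norm_sm by (meson mult_left_mono norm_ge_zero)

lemma bounded_orbit_diff: "bounded_orbit T x \<Longrightarrow> bounded_orbit T y \<Longrightarrow> bounded_orbit T (x - y)"
  using bounded_orbit_add[of x "sm (-1) y"] bounded_orbit_sm[of y "-1"] by (simp add: scale_minus_left)

lemma bounded_orbit_iter: "bounded_orbit T x \<Longrightarrow> bounded_orbit T ((T ^^ m) x)"
  unfolding bounded_orbit_def by (metis funpow_add o_apply)

lemma closed_orbit_bounded_by: "closed {x. \<forall>n. norm ((T ^^ n) x) \<le> K}"
proof -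
  have "closed {x. norm ((T ^^ n) x) \<le> K}" for n
    by (intro closed_Collect_le continuous_intros continuous_on_iter)
  then have "closed (\<Inter>n. {x. norm ((T ^^ n) x) \<le> K})" by auto
  moreover have "{x. \<forall>n. norm ((T ^^ n) x) \<le> K} = (\<Inter>n. {x. norm ((T ^^ n) x) \<le> K})" by auto
  ultimately show ?thesis by simp
qed


section \<open>Bounded orbits modulo a finite-dimensional subspace\<close>

definition decomposable :: "'a set \<Rightarrow> real \<Rightarrow> 'a set" where
  "decomposable F K = {x. \<exists>u. (\<forall>f\<in>F. norm (u f) \<le> K) \<and>
     (\<forall>n. norm ((T ^^ n) (x - (\<Sum>f\<in>F. sm (u f) f))) \<le> K)}"

lemma closed_decomposable:
  assumes "finite F"
  shows "closed (decomposable F K)"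
proof -
  let ?B = "{b. \<forall>n. norm ((T ^^ n) b) \<le> K}"
  let ?C = "{(\<Sum>f\<in>F. sm (u f) f) | u. \<forall>f\<in>F. norm (u f) \<le> K}"
  have eq: "decomposable F K = (\<Union>b\<in>?B. \<Union>w\<in>?C. {b + w})"
  proof (intro equalityI subsetI)
    fix x assume "x \<in> decomposable F K"
    then obtain u where u: "\<forall>f\<in>F. norm (u f) \<le> K"
        "\<forall>n. norm ((T ^^ n) (x - (\<Sum>f\<in>F. sm (u f) f))) \<le> K"
      unfolding decomposable_def by blast
    then have "x - (\<Sum>f\<in>F. sm (u f) f) \<in> ?B" "(\<Sum>f\<in>F. sm (u f) f) \<in> ?C" by blast+
    moreover have "x = (x - (\<Sum>f\<in>F. sm (u f) f)) + (\<Sum>f\<in>F. sm (u f) f)" by simp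
    ultimately show "x \<in> (\<Union>b\<in>?B. \<Union>w\<in>?C. {b + w})" by blast
  next
    fix x assume "x \<in> (\<Union>b\<in>?B. \<Union>w\<in>?C. {b + w})"
    then obtain b u where "b \<in> ?B" "\<forall>f\<in>F. norm (u f) \<le> K" "x = b + (\<Sum>f\<in>F. sm (u f) f)"
      by blast
    then show "x \<in> decomposable F K" unfolding decomposable_def by auto
  qed
  show ?thesis
    unfolding eq by (rule closed_compact_sums[OF closed_orbit_bounded_by compact_bounded_combinations[OF assms]])
qed

lemma decomposable_diff:
  assumes "x \<in> decomposable F K" and "y \<in> decomposable F K"
  shows "x - y \<in> decomposable F (2 * K)"
proof -
  obtain u v where u: "\<forall>f\<in>F. norm (u f) \<le> K" "\<forall>n. norm ((T ^^ n) (x - (\<Sum>f\<in>F. sm (u f) f))) \<le> K"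
    and v: "\<forall>f\<in>F. norm (v f) \<le> K" "\<forall>n. norm ((T ^^ n) (y - (\<Sum>f\<in>F. sm (v f) f))) \<le> K"
    using assms unfolding decomposable_def by blast
  have "x - y - (\<Sum>f\<in>F. sm (u f - v f) f)
      = (x - (\<Sum>f\<in>F. sm (u f) f)) - (y - (\<Sum>f\<in>F. sm (v f) f))"
    by (simp add: scale_left_diff_distrib sum_subtractf)
  then have "norm ((T ^^ n) (x - y - (\<Sum>f\<in>F. sm (u f - v f) f))) \<le> 2 * K" for n
    using u(2) v(2) norm_triangle_ineq4 by (smt (verit) iter_diff)
  moreover have "norm (u f - v f) \<le> 2 * K" if "f \<in> F" for f
    using that u(1) v(1) norm_triangle_ineq4[of "u f" "v f"] by fastforce
  ultimately show ?thesis unfolding decomposable_def mem_Collect_eq by (intro exI[of _ "\<lambda>f. u f - v f"]) blast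
qed

lemma decomposable_scaleR:
  assumes "x \<in> decomposable F K" and "c \<ge> 0"
  shows "c *\<^sub>R x \<in> decomposable F (c * K)"
proof -
  obtain u where u: "\<forall>f\<in>F. norm (u f) \<le> K" "\<forall>n. norm ((T ^^ n) (x - (\<Sum>f\<in>F. sm (u f) f))) \<le> K"
    using assms(1) unfolding decomposable_def by blast
  have "sm (of_real c * u f) f = c *\<^sub>R sm (u f) f" for f
    by (simp add: sm_of_real[symmetric])
  then have "c *\<^sub>R x - (\<Sum>f\<in>F. sm (of_real c * u f) f) = c *\<^sub>R (x - (\<Sum>f\<in>F. sm (u f) f))"
    by (simp add: scaleR_diff_right scaleR_sum_right)
  then have "norm ((T ^^ n) (c *\<^sub>R x - (\<Sum>f\<in>F. sm (of_real c * u f) f))) \<le> c * K" for n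
    using u(2) assms(2) by (simp add: iter_scaleR mult_left_mono)
  moreover have "norm (of_real c * u f) \<le> c * K" if "f \<in> F" for f
    using that u(1) assms(2) by (simp add: norm_mult mult_left_mono)
  ultimately show ?thesis unfolding decomposable_def mem_Collect_eq by (intro exI[of _ "\<lambda>f. of_real c * u f"]) blast
qed

lemma decomposable_cover:
  assumes "finite F" and "\<exists>e\<in>span F. bounded_orbit T (x + e)"
  shows "\<exists>K::nat. x \<in> decomposable F (real K)"
proof -
  obtain e where e: "e \<in> span F" "bounded_orbit T (x + e)" using assms(2) by blast
  obtain u where u: "e = (\<Sum>f\<in>F. sm (u f) f)" using e(1) unfolding span_finite[OF assms(1)] by blast
  obtain B where B: "\<forall>n. norm ((T ^^ n) (x + e)) \<le> B" using e(2) unfolding bounded_orbit_def by blast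
  define K where "K = nat \<lceil>(\<Sum>f\<in>F. norm (u f)) + \<bar>B\<bar>\<rceil>"
  have K: "(\<Sum>f\<in>F. norm (u f)) + \<bar>B\<bar> \<le> real K" unfolding K_def by linarith
  have "norm (- u f) \<le> real K" if "f \<in> F" for f
  proof -
    have "norm (u f) \<le> (\<Sum>f\<in>F. norm (u f))" using that assms(1) by (intro member_le_sum) auto
    then show ?thesis using K by simp
  qed
  moreover have "x - (\<Sum>f\<in>F. sm (- u f) f) = x + e"
    by (simp add: u scale_minus_left sum_negf)
  then have "norm ((T ^^ n) (x - (\<Sum>f\<in>F. sm (- u f) f))) \<le> real K" for n
    using B K by (smt (verit) sum_nonneg norm_ge_zero)
  ultimately show ?thesis unfolding decomposable_def mem_Collect_eq by (intro exI[of _ K] exI[of _ "\<lambda>f. - u f"]) blast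
qed

lemma decomposable_uniformly:
  assumes fin: "finite F" and cover: "\<And>x. \<exists>e\<in>span F. bounded_orbit T (x + e)"
  shows "\<exists>D\<ge>0. \<forall>x. x \<in> decomposable F (D * norm x)"
proof -
  have "\<exists>K. interior (decomposable F (real K)) \<noteq> {}"
  proof (rule ccontr)
    assume "\<not> ?thesis"
    then have "euclidean interior_of (\<Union>K. decomposable F (real K)) = {}"
      by (intro Baire_category_alt)
        (auto simp: completely_metrizable_space_euclidean closed_decomposable[OF fin])
    moreover have "(\<Union>K. decomposable F (real K)) = UNIV"
      using decomposable_cover[OF fin cover] by blast
    ultimately show False by simp
  qed
  then obtain K x1 where "x1 \<in> interior (decomposable F (real K))" by blast
  then obtain \<rho> where \<rho>: "\<rho> > 0" "ball x1 \<rho> \<subseteq> decomposable F (real K)"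
    by (meson interior_subset open_contains_ball_eq open_interior subset_trans)
  have near_0: "x \<in> decomposable F (2 * real K)" if "norm x < \<rho>" for x
  proof -
    have "x1 + x \<in> decomposable F (real K)" "x1 \<in> decomposable F (real K)"
      using \<rho> that by (auto simp: dist_norm)
    from decomposable_diff[OF this] show ?thesis by simp
  qed
  define D where "D = 4 * real K / \<rho>"
  have "x \<in> decomposable F (D * norm x)" for x
  proof -
    \<comment> \<open>For \<open>x = 0\<close> both scalings below are \<open>0\<close>, and the argument still goes through.\<close>
    define x' where "x' = (\<rho> / (2 * norm x)) *\<^sub>R x"
    have "norm x' < \<rho>" unfolding x'_def using \<rho>(1) by (cases "x = 0") auto
    then have "(2 * norm x / \<rho>) *\<^sub>R x' \<in> decomposable F (2 * norm x / \<rho> * (2 * real K))"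
      using \<rho>(1) by (intro decomposable_scaleR near_0) auto
    moreover have "(2 * norm x / \<rho>) *\<^sub>R x' = x" unfolding x'_def using \<rho>(1) by (cases "x = 0") auto
    moreover have "2 * norm x / \<rho> * (2 * real K) = D * norm x" unfolding D_def by simp
    ultimately show ?thesis by simp
  qed
  moreover have "D \<ge> 0" unfolding D_def using \<rho>(1) by simp
  ultimately show ?thesis by blast
qed


context
  fixes F :: "'a set" and D :: real
  assumes finite_F: "finite F"
    and independent: "\<forall>e\<in>span F. bounded_orbit T e \<longrightarrow> e = 0"
    and D_nonneg: "D \<ge> 0"
    and decomposable_D: "\<And>x. x \<in> decomposable F (D * norm x)"
begin

definition proj :: "'a \<Rightarrow> 'a" where
  "proj x = (THE e. e \<in> span F \<and> bounded_orbit T (x - e))"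

lemma proj_unique:
  assumes "e \<in> span F" and "bounded_orbit T (x - e)"
  shows "proj x = e"
proof -
  have uniq: "e' = e" if "e' \<in> span F" "bounded_orbit T (x - e')" for e'
  proof -
    have "bounded_orbit T (e - e')" using bounded_orbit_diff[OF that(2) assms(2)] by simp
    moreover have "e - e' \<in> span F" using assms(1) that(1) by (rule span_diff)
    ultimately show ?thesis using independent by fastforce
  qed
  show ?thesis
    unfolding proj_def using assms uniq by (intro the_equality) blast+
qed

lemma proj_decomposition:
  "\<exists>u. proj x = (\<Sum>f\<in>F. sm (u f) f) \<and> (\<forall>f\<in>F. norm (u f) \<le> D * norm x) \<and>
     (\<forall>n. norm ((T ^^ n) (x - proj x)) \<le> D * norm x)"
proof -
  obtain u where u: "\<forall>f\<in>F. norm (u f) \<le> D * norm x"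
      "\<forall>n. norm ((T ^^ n) (x - (\<Sum>f\<in>F. sm (u f) f))) \<le> D * norm x"
    using decomposable_D[of x] unfolding decomposable_def by blast
  have "proj x = (\<Sum>f\<in>F. sm (u f) f)"
  proof (rule proj_unique)
    show "(\<Sum>f\<in>F. sm (u f) f) \<in> span F" by (intro span_sum span_scale span_base)
    show "bounded_orbit T (x - (\<Sum>f\<in>F. sm (u f) f))" using u(2) unfolding bounded_orbit_def by blast
  qed
  then show ?thesis using u by auto
qed

lemma proj_in_span: "proj x \<in> span F"
proof -
  obtain u where "proj x = (\<Sum>f\<in>F. sm (u f) f)" using proj_decomposition by blast
  moreover have "(\<Sum>f\<in>F. sm (u f) f) \<in> span F" by (intro span_sum span_scale span_base)
  ultimately show ?thesis by simp
qed

lemma norm_iter_diff_proj_le: "norm ((T ^^ n) (x - proj x)) \<le> D * norm x"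
  using proj_decomposition[of x] by blast

lemma bounded_orbit_diff_proj: "bounded_orbit T (x - proj x)"
  unfolding bounded_orbit_def using norm_iter_diff_proj_le by blast

lemma proj_add: "proj (x + y) = proj x + proj y"
proof (rule proj_unique)
  show "proj x + proj y \<in> span F" by (intro span_add proj_in_span)
  have "x + y - (proj x + proj y) = (x - proj x) + (y - proj y)" by simp
  then show "bounded_orbit T (x + y - (proj x + proj y))"
    by (metis bounded_orbit_add bounded_orbit_diff_proj)
qed

lemma proj_sm: "proj (sm c x) = sm c (proj x)"
proof (rule proj_unique)
  show "sm c (proj x) \<in> span F" by (intro span_scale proj_in_span)
  show "bounded_orbit T (sm c x - sm c (proj x))"
    using bounded_orbit_sm[OF bounded_orbit_diff_proj[of x], of c] by (simp add: scale_right_diff_distrib)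
qed

lemma proj_sum: "finite I \<Longrightarrow> proj (sum g I) = (\<Sum>i\<in>I. proj (g i))"
proof (induction I rule: finite_induct)
  case empty
  show ?case by (simp add: proj_unique span_zero)
next
  case (insert i I)
  then show ?case by (simp add: proj_add)
qed

lemma proj_eq_0: "bounded_orbit T b \<Longrightarrow> proj b = 0"
  by (rule proj_unique) (auto simp: span_zero)

lemma proj_span: "e \<in> span F \<Longrightarrow> proj e = e"
  by (rule proj_unique) auto

lemma norm_proj_le: "norm (proj x) \<le> D * (\<Sum>f\<in>F. norm f) * norm x"
proof -
  obtain u where u: "proj x = (\<Sum>f\<in>F. sm (u f) f)" "\<forall>f\<in>F. norm (u f) \<le> D * norm x"
    using proj_decomposition by blast
  have "norm (proj x) \<le> (\<Sum>f\<in>F. norm (u f) * norm f)" unfolding u(1) by (rule norm_sum_sm_le)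
  also have "\<dots> \<le> (\<Sum>f\<in>F. D * norm x * norm f)"
    using u(2) by (intro sum_mono mult_right_mono) auto
  also have "\<dots> = D * (\<Sum>f\<in>F. norm f) * norm x"
    by (simp add: sum_distrib_left mult_ac)
  finally show ?thesis .
qed

text \<open>Bounded orbits are \<open>T\<close>-invariant, so \<open>proj \<circ> T\<^sup>n\<close> only sees the \<open>span F\<close> part of a vector.\<close>

lemma proj_iter_proj: "proj ((T ^^ n) (proj x)) = proj ((T ^^ n) x)"
proof -
  have "(T ^^ n) x = (T ^^ n) (x - proj x) + (T ^^ n) (proj x)" by (simp add: iter_add[symmetric])
  moreover have "proj ((T ^^ n) (x - proj x)) = 0"
    by (intro proj_eq_0 bounded_orbit_iter bounded_orbit_diff_proj)
  ultimately show ?thesis by (simp add: proj_add)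
qed

lemma proj_iter_contracts:
  assumes vanishing: "\<And>x. (\<lambda>m. (T ^^ p m) x) \<longlonglongrightarrow> 0"
  shows "\<exists>N\<ge>1. \<forall>e\<in>span F. norm (proj ((T ^^ N) e)) \<le> norm e / 2"
proof -
  define S where "S = (\<Sum>f\<in>F. norm f)"
  define C where "C = D * (D * S)"
  have C: "C \<ge> 0" unfolding C_def S_def using D_nonneg by (simp add: sum_nonneg)
  have "(\<lambda>m. \<Sum>f\<in>F. norm ((T ^^ p m) (T f))) \<longlonglongrightarrow> 0"
    by (intro tendsto_null_sum tendsto_norm_zero vanishing)
  moreover have "1 / (2 * (C + 1)) > 0" using C by simp
  ultimately have "eventually (\<lambda>m. (\<Sum>f\<in>F. norm ((T ^^ p m) (T f))) < 1 / (2 * (C + 1))) sequentially"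
    by (rule order_tendstoD(2))
  then obtain m where m: "(\<Sum>f\<in>F. norm ((T ^^ p m) (T f))) < 1 / (2 * (C + 1))"
    unfolding eventually_sequentially by blast
  define N where "N = Suc (p m)"
  have sum_small: "(\<Sum>f\<in>F. norm ((T ^^ N) f)) \<le> 1 / (2 * (C + 1))"
    using m unfolding N_def by (simp add: funpow_swap1)
  have "norm (proj ((T ^^ N) e)) \<le> norm e / 2" if "e \<in> span F" for e
  proof -
    obtain u where u: "proj e = (\<Sum>f\<in>F. sm (u f) f)" "\<forall>f\<in>F. norm (u f) \<le> D * norm e"
      using proj_decomposition by blast
    have e: "e = (\<Sum>f\<in>F. sm (u f) f)" using u(1) proj_span[OF that] by simp
    have "proj ((T ^^ N) e) = (\<Sum>f\<in>F. sm (u f) (proj ((T ^^ N) f)))"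
      unfolding e iter_sum iter_sm proj_sum[OF finite_F] proj_sm ..
    then have "norm (proj ((T ^^ N) e)) \<le> (\<Sum>f\<in>F. norm (u f) * norm (proj ((T ^^ N) f)))"
      using norm_sum_sm_le by simp
    also have "\<dots> \<le> (\<Sum>f\<in>F. (D * norm e) * (D * S * norm ((T ^^ N) f)))"
      using u(2) norm_proj_le D_nonneg unfolding S_def by (intro sum_mono mult_mono) auto
    also have "\<dots> = C * norm e * (\<Sum>f\<in>F. norm ((T ^^ N) f))"
      unfolding C_def by (simp add: sum_distrib_left mult_ac)
    also have "\<dots> \<le> C * norm e * (1 / (2 * (C + 1)))"
      using sum_small C by (intro mult_left_mono) auto
    also have "\<dots> \<le> norm e / 2"
      using C by (simp add: field_simps mult_left_mono)
    finally show ?thesis .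
  qed
  then show ?thesis unfolding N_def by (intro exI[of _ "Suc (p m)"]) auto
qed

text \<open>The component of the orbit off \<open>span F\<close> gains at most \<open>D \<parallel>T\<parallel> \<parallel>proj (T\<^sup>j x)\<parallel>\<close> per step.\<close>

lemma norm_iter_orbit_diff_proj_le:
  "norm ((T ^^ k) ((T ^^ n) x - proj ((T ^^ n) x)))
     \<le> D * norm x + D * onorm T * (\<Sum>j<n. norm (proj ((T ^^ j) x)))"
proof (induction n arbitrary: k)
  case 0
  show ?case using norm_iter_diff_proj_le by simp
next
  case (Suc n)
  define e where "e = proj ((T ^^ n) x)"
  define h where "h = T e - proj (T e)"
  have "(T ^^ Suc n) x = T ((T ^^ n) x - e) + T e"
    by (simp add: linear_simps(1)[OF bounded_linear_T, symmetric])
  moreover have "proj ((T ^^ Suc n) x) = proj (T e)"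
    using proj_iter_proj[of 1 "(T ^^ n) x"] unfolding e_def by simp
  ultimately have "(T ^^ Suc n) x - proj ((T ^^ Suc n) x) = T ((T ^^ n) x - e) + h"
    unfolding h_def by simp
  then have "norm ((T ^^ k) ((T ^^ Suc n) x - proj ((T ^^ Suc n) x)))
      \<le> norm ((T ^^ Suc k) ((T ^^ n) x - e)) + norm ((T ^^ k) h)"
    by (simp add: iter_add funpow_swap1 norm_triangle_ineq)
  also have "\<dots> \<le> (D * norm x + D * onorm T * (\<Sum>j<n. norm (proj ((T ^^ j) x)))) + D * (onorm T * norm e)"
  proof (rule add_mono)
    have "norm ((T ^^ k) h) \<le> D * norm (T e)" unfolding h_def by (rule norm_iter_diff_proj_le)
    also have "\<dots> \<le> D * (onorm T * norm e)"
      using onorm[OF bounded_linear_T] D_nonneg by (intro mult_left_mono) auto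
    finally show "norm ((T ^^ k) h) \<le> D * (onorm T * norm e)" .
  qed (unfold e_def, rule Suc.IH)
  also have "\<dots> = D * norm x + D * onorm T * (\<Sum>j<Suc n. norm (proj ((T ^^ j) x)))"
    unfolding e_def by (simp add: algebra_simps)
  finally show ?case .
qed

lemma bounded_orbit_if_proj_iter_contracts:
  assumes N: "N \<ge> 1" and contracts: "\<forall>e\<in>span F. norm (proj ((T ^^ N) e)) \<le> norm e / 2"
  shows "bounded_orbit T x"
proof -
  define e where "e n = proj ((T ^^ n) x)" for n
  have "norm (e (n + N)) \<le> norm (e n) / 2" for n
  proof -
    have "e (n + N) = proj ((T ^^ N) (e n))"
      unfolding e_def proj_iter_proj by (simp add: funpow_add add.commute)
    then show ?thesis using contracts proj_in_span unfolding e_def by auto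
  qed
  then obtain B where B: "\<And>n. (\<Sum>j<n. norm (e j)) \<le> B"
    using partial_sums_bounded_if_halving[OF N, of "\<lambda>n. norm (e n)"] by auto
  have "norm ((T ^^ n) x) \<le> D * norm x + D * onorm T * B + B" for n
  proof -
    have "norm ((T ^^ n) x) \<le> norm ((T ^^ n) x - e n) + norm (e n)"
      by (metis diff_add_cancel norm_triangle_ineq)
    also have "norm ((T ^^ n) x - e n) \<le> D * norm x + D * onorm T * B"
      using norm_iter_orbit_diff_proj_le[of 0 n x] B[of n] D_nonneg onorm_pos_le[OF bounded_linear_T]
      unfolding e_def by (simp add: mult_left_mono add_left_mono order_trans)
    also have "norm (e n) \<le> B"
      using B[of "Suc n"] by (simp add: sum_nonneg order_trans[OF _ B[of "Suc n"]])
    finally show ?thesis by simp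
  qed
  then show ?thesis unfolding bounded_orbit_def by blast
qed

end

theorem exists_vector_off_bounded_orbits_plus_span:
  assumes fin: "finite F"
    and independent: "\<forall>e\<in>span F. bounded_orbit T e \<longrightarrow> e = 0"
    and vanishing: "\<And>x. (\<lambda>m. (T ^^ p m) x) \<longlonglongrightarrow> 0"
    and unbounded: "\<not> bounded_orbit T u"
  shows "\<exists>v. \<forall>e\<in>span F. \<not> bounded_orbit T (v + e)"
proof (rule ccontr)
  assume "\<not> ?thesis"
  then have "\<exists>e\<in>span F. bounded_orbit T (x + e)" for x by blast
  then obtain D where D: "D \<ge> 0" "\<And>x. x \<in> decomposable F (D * norm x)"
    using decomposable_uniformly[OF fin] by blast
  obtain N where "N \<ge> 1" "\<forall>e\<in>span F. norm (proj F ((T ^^ N) e)) \<le> norm e / 2"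
    using proj_iter_contracts[OF fin independent D vanishing] by blast
  then have "bounded_orbit T u"
    by (rule bounded_orbit_if_proj_iter_contracts[OF fin independent D])
  then show False using unbounded by contradiction
qed


lemma independent_insert:
  assumes "\<forall>e\<in>span F. bounded_orbit T e \<longrightarrow> e = 0"
    and "\<forall>e\<in>span F. \<not> bounded_orbit T (y + e)"
  shows "\<forall>e\<in>span (insert y F). bounded_orbit T e \<longrightarrow> e = 0"
proof (intro ballI impI)
  fix e assume e: "e \<in> span (insert y F)" "bounded_orbit T e"
  then obtain c where c: "e - sm c y \<in> span F" unfolding span_breakdown_eq by blast
  show "e = 0"
  proof (cases "c = 0")
    case True
    then show ?thesis using c e(2) assms(1) by auto
  next
    case False
    have "sm (inverse c) e = y + sm (inverse c) (e - sm c y)"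
      using False by (simp add: scale_right_diff_distrib)
    moreover have "bounded_orbit T (sm (inverse c) e)" using bounded_orbit_sm[OF e(2)] .
    moreover have "sm (inverse c) (e - sm c y) \<in> span F" using c by (rule span_scale)
    ultimately show ?thesis using assms(2) by metis
  qed
qed

lemma subspace_bounded_modulo_span: "subspace {y. \<exists>e\<in>span F. bounded_orbit T (y + e)}"
proof (unfold subspace_def, intro conjI allI ballI impI)
  show "0 \<in> {y. \<exists>e\<in>span F. bounded_orbit T (y + e)}" using span_zero by force
next
  fix x y assume "x \<in> {y. \<exists>e\<in>span F. bounded_orbit T (y + e)}" "y \<in> {y. \<exists>e\<in>span F. bounded_orbit T (y + e)}"
  then obtain e e' where "e \<in> span F" "bounded_orbit T (x + e)" "e' \<in> span F" "bounded_orbit T (y + e')"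
    by blast
  moreover have "x + y + (e + e') = (x + e) + (y + e')" by simp
  ultimately show "x + y \<in> {y. \<exists>e\<in>span F. bounded_orbit T (y + e)}"
    by (metis (mono_tags, lifting) bounded_orbit_add mem_Collect_eq span_add)
next
  fix c x assume "x \<in> {y. \<exists>e\<in>span F. bounded_orbit T (y + e)}"
  then obtain e where "e \<in> span F" "bounded_orbit T (x + e)" by blast
  then show "sm c x \<in> {y. \<exists>e\<in>span F. bounded_orbit T (y + e)}"
    by (metis (mono_tags, lifting) bounded_orbit_sm mem_Collect_eq scale_right_distrib span_scale)
qed

lemma exists_near_independent_extension:
  assumes fin: "finite F"
    and independent: "\<forall>e\<in>span F. bounded_orbit T e \<longrightarrow> e = 0"
    and vanishing: "\<And>x. (\<lambda>m. (T ^^ p m) x) \<longlonglongrightarrow> 0"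
    and unbounded: "\<not> bounded_orbit T u"
    and "r > 0"
  shows "\<exists>y. dist y t < r \<and> (\<forall>e\<in>span (insert y F). bounded_orbit T e \<longrightarrow> e = 0)"
proof -
  let ?M = "{y. \<exists>e\<in>span F. bounded_orbit T (y + e)}"
  obtain v where "\<forall>e\<in>span F. \<not> bounded_orbit T (v + e)"
    using exists_vector_off_bounded_orbits_plus_span[OF fin independent vanishing unbounded] by blast
  then have "?M \<noteq> UNIV" by blast
  then obtain y where "y \<notin> ?M" "dist y t < r"
    using proper_subspace_complement_dense[OF real_subspace[OF subspace_bounded_modulo_span] _ \<open>r > 0\<close>]
    unfolding subspace_raw_def by blast
  then show ?thesis using independent_insert[OF independent] by blast
qed

end

section \<open>Operators with a dense set of \<open>p\<close>-null vectors\<close>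

locale li_yorke_operator = operator_over sm T
  for sm :: "'k::{real_normed_field,heine_borel} \<Rightarrow> 'a::banach \<Rightarrow> 'a" and T +
  fixes p :: "nat \<Rightarrow> nat"
  assumes vanishing_dense: "closure {x. (\<lambda>m. (T ^^ p m) x) \<longlonglongrightarrow> 0} = UNIV"
    and unbounded_orbit: "\<exists>u. \<not> bounded_orbit T u"
begin

definition vanishing :: "'a set" where
  "vanishing = {x. (\<lambda>m. (T ^^ p m) x) \<longlonglongrightarrow> 0}"

lemma vanishing_approx: "e > 0 \<Longrightarrow> \<exists>a\<in>vanishing. dist a x < e"
  using vanishing_dense unfolding vanishing_def[symmetric] by (metis UNIV_I closure_approachable)

lemma vanishing_scaleR: "x \<in> vanishing \<Longrightarrow> c *\<^sub>R x \<in> vanishing"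
  unfolding vanishing_def using tendsto_scaleR[OF tendsto_const, of _ 0 sequentially c]
  by (simp add: iter_scaleR)

lemma vanishing_eventually_small:
  assumes "finite I" and "I \<subseteq> vanishing" and "e > 0"
  shows "\<exists>m0. \<forall>m\<ge>m0. \<forall>x\<in>I. norm ((T ^^ p m) x) \<le> e"
proof -
  have "eventually (\<lambda>m. norm ((T ^^ p m) x) < e) sequentially" if "x \<in> I" for x
  proof -
    have "(\<lambda>m. norm ((T ^^ p m) x)) \<longlonglongrightarrow> 0"
      using that assms(2) tendsto_norm_zero unfolding vanishing_def by blast
    then show ?thesis using assms(3) by (rule order_tendstoD)
  qed
  then have "eventually (\<lambda>m. \<forall>x\<in>I. norm ((T ^^ p m) x) < e) sequentially"
    using assms(1) by (simp add: eventually_ball_finite)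
  then show ?thesis unfolding eventually_sequentially by (meson less_imp_le)
qed

lemma small_values_if_vanishing:
  assumes "x \<in> vanishing" and "e > 0"
  shows "\<exists>n. norm ((T ^^ n) x) < e"
proof -
  obtain m0 where "\<forall>m\<ge>m0. norm ((T ^^ p m) x) \<le> e / 2"
    using vanishing_eventually_small[of "{x}" "e / 2"] assms by auto
  then have "norm ((T ^^ p m0) x) \<le> e / 2" by blast
  then show ?thesis using assms(2) by (intro exI[of _ "p m0"]) linarith
qed

lemma iter_small_near_0:
  assumes "finite Ns" and "\<eta> > 0"
  shows "\<exists>\<kappa>>0. \<forall>z. norm z \<le> \<kappa> \<longrightarrow> (\<forall>n\<in>Ns. norm ((T ^^ n) z) \<le> \<eta>)"
proof -
  define K where "K = 1 + (\<Sum>n\<in>Ns. onorm (T ^^ n))"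
  have onorm_nonneg: "onorm (T ^^ n) \<ge> 0" for n by (rule onorm_pos_le[OF bounded_linear_iter])
  have K: "K > 0" unfolding K_def using onorm_nonneg by (simp add: add_pos_nonneg sum_nonneg)
  have K_ge: "onorm (T ^^ n) \<le> K" if "n \<in> Ns" for n
  proof -
    have "onorm (T ^^ n) \<le> (\<Sum>n\<in>Ns. onorm (T ^^ n))"
      using that assms(1) onorm_nonneg by (intro member_le_sum) auto
    then show ?thesis unfolding K_def by simp
  qed
  have "norm ((T ^^ n) z) \<le> \<eta>" if "norm z \<le> \<eta> / K" "n \<in> Ns" for z n
  proof -
    have "norm ((T ^^ n) z) \<le> onorm (T ^^ n) * norm z" by (rule norm_iter_le)
    also have "\<dots> \<le> K * (\<eta> / K)"
      using that K_ge onorm_nonneg K by (intro mult_mono) auto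
    also have "\<dots> = \<eta>" using K by simp
    finally show ?thesis .
  qed
  moreover have "\<eta> / K > 0" using K assms(2) by simp
  ultimately show ?thesis by blast
qed

lemma vanishing_eq_UNIV_if_uniformly_bounded:
  assumes "\<exists>C. \<forall>m x. norm ((T ^^ p m) x) \<le> C * norm x"
  shows "(\<lambda>m. (T ^^ p m) x) \<longlonglongrightarrow> 0"
proof -
  obtain C where "\<And>m x. norm ((T ^^ p m) x) \<le> C * norm x" using assms by blast
  then have "closed vanishing"
    unfolding vanishing_def
    by (intro closed_null_set_if_uniformly_bounded bounded_linear.linear[OF bounded_linear_iter])
  then have "vanishing = UNIV"
    using vanishing_dense unfolding vanishing_def[symmetric] closure_closed by simp
  then show ?thesis unfolding vanishing_def by blast
qed

lemma span_range_subset_span_prefix: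
  fixes y :: "nat \<Rightarrow> 'a"
  assumes "v \<in> span (range y)"
  shows "\<exists>n. v \<in> span (y ` {..<n})"
proof -
  obtain K c where K: "finite K" "v = (\<Sum>k\<in>K. sm (c k) (y k))"
    using span_range_eq_sum[OF assms] by blast
  have "k < Suc (\<Sum>K)" if "k \<in> K" for k
    using member_le_sum[of k K "\<lambda>k. k"] that K(1) by simp
  then have "v \<in> span (y ` {..<Suc (\<Sum>K)})"
    unfolding K(2) by (intro span_sum span_scale span_base) auto
  then show ?thesis by blast
qed

theorem irregular_sequence_if_uniformly_bounded:
  fixes t :: "nat \<Rightarrow> 'a" and r :: "nat \<Rightarrow> real"
  assumes bounded: "\<exists>C. \<forall>m x. norm ((T ^^ p m) x) \<le> C * norm x"
    and r: "\<And>k. r k > 0"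
  shows "\<exists>y. (\<forall>k. dist (y k) (t k) < r k) \<and> (\<forall>v\<in>span (range y). v \<noteq> 0 \<longrightarrow> irregular_vector T v)"
proof -
  note vanishing = vanishing_eq_UNIV_if_uniformly_bounded[OF bounded]
  obtain u where u: "\<not> bounded_orbit T u" using unbounded_orbit by blast
  define Q where "Q i y \<longleftrightarrow> (\<forall>e\<in>span (y ` {..i}). bounded_orbit T e \<longrightarrow> e = 0) \<and>
      dist (y i) (t i) < r i" for i y
  have local: "Q i y'" if "Q i y" "\<And>k. k \<le> i \<Longrightarrow> y' k = y k" for i y y'
  proof -
    have "y' ` {..i} = y ` {..i}" using that(2) by auto
    then show ?thesis using that unfolding Q_def by simp
  qed
  have step: "\<exists>x. Q i (y(i := x))" if earlier: "\<And>k. k < i \<Longrightarrow> Q k y" for i y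
  proof -
    have "\<forall>e\<in>span (y ` {..<i}). bounded_orbit T e \<longrightarrow> e = 0"
    proof (cases i)
      case (Suc j)
      then have "{..<i} = {..j}" by auto
      then show ?thesis using earlier[of j] Suc unfolding Q_def by simp
    qed simp
    then have "\<exists>x. dist x (t i) < r i \<and>
        (\<forall>e\<in>span (insert x (y ` {..<i})). bounded_orbit T e \<longrightarrow> e = 0)"
      by (rule exists_near_independent_extension[OF finite_imageI[OF finite_lessThan] _ vanishing u r])
    then obtain x where "dist x (t i) < r i" "\<forall>e\<in>span (insert x (y ` {..<i})). bounded_orbit T e \<longrightarrow> e = 0"
      by blast
    moreover have "(y(i := x)) ` {..i} = insert x (y ` {..<i})" by (auto simp: image_def le_less)
    ultimately show ?thesis unfolding Q_def by (intro exI[of _ x]) simp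
  qed
  have "\<exists>y. \<forall>i. Q i y"
    by (rule dependent_choice_local) (fact local step)+
  then obtain y where Q: "\<And>i. Q i y" by blast
  have "dist (y k) (t k) < r k" for k using Q[of k] unfolding Q_def by simp
  moreover have "irregular_vector T v" if v: "v \<in> span (range y)" "v \<noteq> 0" for v
  proof (rule irregular_vectorI)
    show "T 0 = 0" by (rule T_zero)
    show "\<exists>n. norm ((T ^^ n) v) < e" if "e > 0" for e
      using small_values_if_vanishing[OF _ that] vanishing unfolding vanishing_def by blast
    obtain n where n: "v \<in> span (y ` {..<n})"
      using span_range_subset_span_prefix[OF v(1)] by blast
    moreover have "y ` {..<n} \<subseteq> y ` {..n}" by auto
    ultimately have "v \<in> span (y ` {..n})" using span_mono by blast
    then show "\<not> bounded_orbit T v" using Q[of n] v(2) unfolding Q_def by blast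
  qed
  ultimately show ?thesis by blast
qed

end

section \<open>Gluing bumps when the iterates along \<open>p\<close> are not uniformly bounded\<close>

record 'a stage =
  base :: 'a
  bump :: 'a
  peak :: nat
  trough :: nat

text \<open>Each index \<open>k\<close> owns the infinitely many stages \<open>prod_encode (k, j)\<close>.\<close>

definition owner :: "nat \<Rightarrow> nat" where
  "owner i = fst (prod_decode i)"

lemma owner_prod_encode [simp]: "owner (prod_encode (k, j)) = k"
  unfolding owner_def by simp

context li_yorke_operator begin

lemma exists_hump:
  assumes unif: "\<forall>C. \<exists>m x. norm ((T ^^ p m) x) > C * norm x"
  shows "\<exists>m\<ge>m1. \<exists>w\<in>vanishing. norm ((T ^^ p m) w) > C * norm w"
proof -
  define C' where "C' = max C (\<Sum>m<m1. onorm (T ^^ p m))"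
  obtain m x where mx: "norm ((T ^^ p m) x) > C' * norm x" using unif by blast
  have "m \<ge> m1"
  proof (rule ccontr)
    assume "\<not> m \<ge> m1"
    then have "onorm (T ^^ p m) \<le> (\<Sum>m<m1. onorm (T ^^ p m))"
      by (intro member_le_sum onorm_pos_le bounded_linear_iter) auto
    then have "onorm (T ^^ p m) \<le> C'" unfolding C'_def by linarith
    then have "norm ((T ^^ p m) x) \<le> C' * norm x"
      using norm_iter_le[of "p m" x] by (metis mult_right_mono norm_ge_zero order_trans)
    then show False using mx by simp
  qed
  define U where "U = {y. C * norm y < norm ((T ^^ p m) y)}"
  have "open U" unfolding U_def
    by (intro open_Collect_less continuous_intros continuous_on_iter)
  moreover have "x \<in> U"
  proof -
    have "C * norm x \<le> C' * norm x" unfolding C'_def by (simp add: mult_right_mono)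
    then show ?thesis using mx by (simp add: U_def)
  qed
  ultimately obtain w where "w \<in> U" "w \<in> vanishing"
    using vanishing_dense unfolding vanishing_def[symmetric]
    by (metis UNIV_I open_Int_closure_eq_empty disjoint_iff)
  then show ?thesis using \<open>m \<ge> m1\<close> by (auto simp: U_def)
qed

lemma exists_scaled_hump:
  assumes unif: "\<forall>C. \<exists>m x. norm ((T ^^ p m) x) > C * norm x" and "\<kappa> > 0"
  shows "\<exists>m\<ge>m1. \<exists>z\<in>vanishing. norm z = \<kappa> \<and> norm ((T ^^ p m) z) > H"
proof -
  obtain m w where mw: "m \<ge> m1" "w \<in> vanishing" "norm ((T ^^ p m) w) > (H / \<kappa>) * norm w"
    using exists_hump[OF unif] by blast
  then have "w \<noteq> 0" by auto
  define z where "z = (\<kappa> / norm w) *\<^sub>R w"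
  have "norm ((T ^^ p m) z) = (\<kappa> / norm w) * norm ((T ^^ p m) w)"
    unfolding z_def iter_scaleR using \<open>\<kappa> > 0\<close> by simp
  also have "\<dots> > (\<kappa> / norm w) * ((H / \<kappa>) * norm w)"
    using mw(3) \<open>\<kappa> > 0\<close> \<open>w \<noteq> 0\<close> by (intro mult_strict_left_mono) auto
  also have "(\<kappa> / norm w) * ((H / \<kappa>) * norm w) = H"
    using \<open>\<kappa> > 0\<close> \<open>w \<noteq> 0\<close> by (simp add: field_simps)
  finally have "norm ((T ^^ p m) z) > H" .
  moreover have "z \<in> vanishing" "norm z = \<kappa>"
    unfolding z_def using mw(2) \<open>w \<noteq> 0\<close> \<open>\<kappa> > 0\<close> by (auto intro: vanishing_scaleR)
  ultimately show ?thesis using mw(1) by blast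
qed

text \<open>Stage \<open>i\<close> of the construction: \<open>base\<close> approximates \<open>t i\<close>, and \<open>bump\<close> is a small
  vector that will be added to the \<open>owner i\<close>-th vector.  At the \<open>peak\<close> time the new bump is
  large while everything else built so far stays bounded; at the \<open>trough\<close> time everything built
  so far is of size \<open>O(1/(i+1))\<close>.\<close>
definition admissible :: "(nat \<Rightarrow> 'a) \<Rightarrow> (nat \<Rightarrow> real) \<Rightarrow> nat \<Rightarrow> (nat \<Rightarrow> 'a stage) \<Rightarrow> bool" where
  "admissible t r i s \<longleftrightarrow>
     base (s i) \<in> vanishing \<and> dist (base (s i)) (t i) < r i / 2 \<and>
     bump (s i) \<in> vanishing \<and> norm (bump (s i)) \<le> r (owner i) / 8 * (1/2) ^ i \<and>
     (\<forall>k\<le>i. norm ((T ^^ peak (s i)) (base (s k))) \<le> 1) \<and>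
     (\<forall>l<i. norm ((T ^^ peak (s i)) (bump (s l))) \<le> (1/2) ^ l) \<and>
     real i + 1 \<le> norm ((T ^^ peak (s i)) (bump (s i))) \<and>
     (\<forall>j<i. norm ((T ^^ peak (s j)) (bump (s i))) \<le> (1/2) ^ i \<and>
            norm ((T ^^ trough (s j)) (bump (s i))) \<le> (1/2) ^ i / (real j + 1)) \<and>
     (\<forall>k\<le>i. norm ((T ^^ trough (s i)) (base (s k))) \<le> 1 / (real i + 1)) \<and>
     (\<forall>l\<le>i. norm ((T ^^ trough (s i)) (bump (s l))) \<le> (1/2) ^ l / (real i + 1))"

lemma admissible_local:
  assumes "admissible t r i s" and "\<And>k. k \<le> i \<Longrightarrow> s' k = s k"
  shows "admissible t r i s'"
  using assms(1) unfolding admissible_def by (simp add: assms(2))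

lemma admissible_updI:
  assumes a: "a \<in> vanishing" "dist a (t i) < r i / 2"
    and z: "z \<in> vanishing" "norm z \<le> r (owner i) / 8 * (1/2) ^ i" "real i + 1 \<le> norm ((T ^^ N) z)"
    and peak: "\<forall>x\<in>insert a (base ` s ` {..<i} \<union> bump ` s ` {..<i}). norm ((T ^^ N) x) \<le> (1/2) ^ i"
    and old_times: "\<forall>n\<in>peak ` s ` {..<i} \<union> trough ` s ` {..<i}. norm ((T ^^ n) z) \<le> (1/2) ^ i / (real i + 1)"
    and trough: "\<forall>x\<in>insert a (insert z (base ` s ` {..<i} \<union> bump ` s ` {..<i})).
      norm ((T ^^ M) x) \<le> (1/2) ^ i / (real i + 1)"
  shows "admissible t r i (s(i := \<lparr>base = a, bump = z, peak = N, trough = M\<rparr>))"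
    (is "admissible t r i ?s")
  unfolding admissible_def fun_upd_same stage.simps
proof (intro conjI allI impI)
  have half_mono: "(1/2::real) ^ i \<le> (1/2) ^ l" if "l \<le> i" for l
    using that by (intro power_decreasing) auto
  have half_le_1: "(1/2::real) ^ i \<le> 1" by (simp add: power_le_one)
  show "a \<in> vanishing" "dist a (t i) < r i / 2" "z \<in> vanishing"
    "norm z \<le> r (owner i) / 8 * (1/2) ^ i" "real i + 1 \<le> norm ((T ^^ N) z)"
    using a z by auto
  {
    fix k assume "k \<le> i"
    then have "base (?s k) \<in> insert a (base ` s ` {..<i} \<union> bump ` s ` {..<i})" by auto
    then have "norm ((T ^^ N) (base (?s k))) \<le> (1/2) ^ i"
      "norm ((T ^^ M) (base (?s k))) \<le> (1/2) ^ i / (real i + 1)"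
      using peak trough by blast+
    moreover have "(1/2::real) ^ i / (real i + 1) \<le> 1 / (real i + 1)"
      using half_le_1 by (intro divide_right_mono) auto
    ultimately show "norm ((T ^^ N) (base (?s k))) \<le> 1"
      "norm ((T ^^ M) (base (?s k))) \<le> 1 / (real i + 1)"
      using half_le_1 by linarith+
  }
  {
    fix l assume "l < i"
    then have "norm ((T ^^ N) (bump (?s l))) \<le> (1/2) ^ i" using peak by auto
    then show "norm ((T ^^ N) (bump (?s l))) \<le> (1/2) ^ l"
      using half_mono[of l] \<open>l < i\<close> by linarith
  }
  {
    fix j assume "j < i"
    then have "norm ((T ^^ peak (s j)) z) \<le> (1/2) ^ i / (real i + 1)"
      "norm ((T ^^ trough (s j)) z) \<le> (1/2) ^ i / (real i + 1)"
      using old_times by auto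
    moreover have "(1/2::real) ^ i / (real i + 1) \<le> (1/2) ^ i" by (simp add: divide_le_eq)
    moreover have "(1/2::real) ^ i / (real i + 1) \<le> (1/2) ^ i / (real j + 1)"
      using \<open>j < i\<close> by (intro divide_left_mono) auto
    ultimately show "norm ((T ^^ peak (?s j)) z) \<le> (1/2) ^ i"
      "norm ((T ^^ trough (?s j)) z) \<le> (1/2) ^ i / (real j + 1)"
      using \<open>j < i\<close> by auto
  }
  {
    fix l assume "l \<le> i"
    then have "norm ((T ^^ M) (bump (?s l))) \<le> (1/2) ^ i / (real i + 1)" using trough by auto
    moreover have "(1/2::real) ^ i / (real i + 1) \<le> (1/2) ^ l / (real i + 1)"
      using half_mono[OF \<open>l \<le> i\<close>] by (intro divide_right_mono) auto
    ultimately show "norm ((T ^^ M) (bump (?s l))) \<le> (1/2) ^ l / (real i + 1)" by linarith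
  }
qed

lemma admissible_extend:
  assumes unif: "\<forall>C. \<exists>m x. norm ((T ^^ p m) x) > C * norm x"
    and r: "\<And>k. r k > 0"
    and earlier: "\<And>k. k < i \<Longrightarrow> admissible t r k s"
  shows "\<exists>x. admissible t r i (s(i := x))"
proof -
  let ?old = "base ` s ` {..<i} \<union> bump ` s ` {..<i}"
  let ?times = "peak ` s ` {..<i} \<union> trough ` s ` {..<i}"
  have old: "finite ?old" "?old \<subseteq> vanishing"
    using earlier unfolding admissible_def by auto
  obtain a where a: "a \<in> vanishing" "dist a (t i) < r i / 2"
    using vanishing_approx[of "r i / 2" "t i"] r by auto
  obtain m1 where m1: "\<forall>m\<ge>m1. \<forall>x\<in>insert a ?old. norm ((T ^^ p m) x) \<le> (1/2) ^ i"
    using vanishing_eventually_small[of "insert a ?old" "(1/2) ^ i"] old a(1) by auto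
  obtain \<kappa>0 where \<kappa>0: "\<kappa>0 > 0"
    "\<forall>z. norm z \<le> \<kappa>0 \<longrightarrow> (\<forall>n\<in>?times. norm ((T ^^ n) z) \<le> (1/2) ^ i / (real i + 1))"
    using iter_small_near_0[of ?times "(1/2) ^ i / (real i + 1)"] by auto
  define \<kappa> where "\<kappa> = min \<kappa>0 (r (owner i) / 8 * (1/2) ^ i)"
  have "\<kappa> > 0" unfolding \<kappa>_def using \<kappa>0(1) r by simp
  then obtain m z where mz: "m \<ge> m1" "z \<in> vanishing" "norm z = \<kappa>" "norm ((T ^^ p m) z) > real i + 1"
    using exists_scaled_hump[OF unif] by blast
  obtain m2 where m2: "\<forall>m\<ge>m2. \<forall>x\<in>insert a (insert z ?old).
      norm ((T ^^ p m) x) \<le> (1/2) ^ i / (real i + 1)"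
    using vanishing_eventually_small[of "insert a (insert z ?old)" "(1/2) ^ i / (real i + 1)"]
      old a(1) mz(2) by auto
  have "admissible t r i (s(i := \<lparr>base = a, bump = z, peak = p m, trough = p m2\<rparr>))"
    using a mz m1 m2 \<kappa>0(2) unfolding \<kappa>_def by (intro admissible_updI) auto
  then show ?thesis by blast
qed

context
  fixes t :: "nat \<Rightarrow> 'a" and r :: "nat \<Rightarrow> real" and s :: "nat \<Rightarrow> 'a stage"
  assumes r: "\<And>k. 0 < r k \<and> r k \<le> 1"
    and adm: "\<And>i. admissible t r i s"
begin

definition glued :: "nat \<Rightarrow> 'a" where
  "glued k = base (s k) + (\<Sum>l. if owner l = k then bump (s l) else 0)"

lemma norm_bump_le: "norm (bump (s l)) \<le> r (owner l) / 8 * (1/2) ^ l"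
  using adm[of l] unfolding admissible_def by blast

lemma norm_bump_le_half: "norm (bump (s l)) \<le> (1/2) ^ l"
proof -
  have "r (owner l) / 8 * (1/2) ^ l \<le> 1 * (1/2::real) ^ l"
    using r[of "owner l"] by (intro mult_right_mono) auto
  then show ?thesis using norm_bump_le[of l] by linarith
qed

lemma iter_glued:
  "(T ^^ n) (glued k) = (T ^^ n) (base (s k)) + (\<Sum>l. if owner l = k then (T ^^ n) (bump (s l)) else 0)"
proof -
  have "norm (if owner l = k then bump (s l) else 0) \<le> 1 * (1/2) ^ l" for l
    using norm_bump_le_half[of l] by simp
  then have "summable (\<lambda>l. if owner l = k then bump (s l) else 0)"
    by (rule geometrically_bounded_series)
  then have "(T ^^ n) (\<Sum>l. if owner l = k then bump (s l) else 0)
      = (\<Sum>l. (T ^^ n) (if owner l = k then bump (s l) else 0))"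
    by (rule bounded_linear.suminf[OF bounded_linear_iter])
  also have "\<dots> = (\<Sum>l. if owner l = k then (T ^^ n) (bump (s l)) else 0)"
    by (intro suminf_cong) simp
  finally show ?thesis unfolding glued_def iter_add by simp
qed

lemma dist_glued: "dist (glued k) (t k) < r k"
proof -
  have "norm (if owner l = k then bump (s l) else 0) \<le> r k / 8 * (1/2) ^ l" for l
    using norm_bump_le[of l] r[of k] by auto
  then have "norm (\<Sum>l. if owner l = k then bump (s l) else 0) \<le> 2 * (r k / 8)"
    by (rule geometrically_bounded_series)
  moreover have "dist (base (s k)) (t k) < r k / 2" using adm[of k] unfolding admissible_def by blast
  moreover have "glued k - t k = (base (s k) - t k) + (\<Sum>l. if owner l = k then bump (s l) else 0)"
    unfolding glued_def by simp
  then have "dist (glued k) (t k)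
      \<le> dist (base (s k)) (t k) + norm (\<Sum>l. if owner l = k then bump (s l) else 0)"
    unfolding dist_norm by (simp only: norm_triangle_ineq)
  ultimately show ?thesis using r[of k] by linarith
qed

lemma norm_trough_glued: "k \<le> i \<Longrightarrow> norm ((T ^^ trough (s i)) (glued k)) \<le> 3 / (real i + 1)"
proof -
  assume "k \<le> i"
  have "norm (if owner l = k then (T ^^ trough (s i)) (bump (s l)) else 0) \<le> 1 / (real i + 1) * (1/2) ^ l" for l
  proof (cases "l \<le> i")
    case True
    then show ?thesis using adm[of i] unfolding admissible_def by auto
  next
    case False
    then show ?thesis using adm[of l] unfolding admissible_def by auto
  qed
  then have "norm (\<Sum>l. if owner l = k then (T ^^ trough (s i)) (bump (s l)) else 0) \<le> 2 * (1 / (real i + 1))"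
    by (rule geometrically_bounded_series)
  moreover have "norm ((T ^^ trough (s i)) (base (s k))) \<le> 1 / (real i + 1)"
    using adm[of i] \<open>k \<le> i\<close> unfolding admissible_def by blast
  ultimately have "norm ((T ^^ trough (s i)) (glued k)) \<le> 1 / (real i + 1) + 2 * (1 / (real i + 1))"
    unfolding iter_glued by (meson add_mono norm_triangle_ineq order_trans)
  then show ?thesis by (simp add: field_simps)
qed

lemma norm_peak_glued_diff:
  assumes "k \<le> i"
  shows "norm ((T ^^ peak (s i)) (glued k) - (if owner i = k then (T ^^ peak (s i)) (bump (s i)) else 0)) \<le> 3"
proof -
  let ?f = "\<lambda>l. if owner l = k then (T ^^ peak (s i)) (bump (s l)) else 0"
  let ?g = "\<lambda>l. if l = i then 0 else ?f l"
  have "norm (?g l) \<le> 1 * (1/2) ^ l" for l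
  proof (cases "l < i")
    case True
    then show ?thesis using adm[of i] unfolding admissible_def by auto
  next
    case False
    then show ?thesis using adm[of l] unfolding admissible_def by (auto simp: not_less le_less)
  qed
  note g = geometrically_bounded_series[OF this]
  have "(\<lambda>l. ?g l + (if l = i then ?f i else 0)) sums (suminf ?g + ?f i)"
    using sums_add[OF summable_sums[OF g(1)] sums_single[of i "\<lambda>_. ?f i"]] by simp
  moreover have "(\<lambda>l. ?g l + (if l = i then ?f i else 0)) = ?f" by auto
  ultimately have "?f sums (suminf ?g + ?f i)" by (simp only:)
  then have "suminf ?f = suminf ?g + ?f i" by (rule sums_unique[symmetric])
  moreover have "norm ((T ^^ peak (s i)) (base (s k))) \<le> 1"
    using adm[of i] \<open>k \<le> i\<close> unfolding admissible_def by blast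
  ultimately have "(T ^^ peak (s i)) (glued k) - ?f i = (T ^^ peak (s i)) (base (s k)) + suminf ?g"
    unfolding iter_glued by simp
  then have "norm ((T ^^ peak (s i)) (glued k) - ?f i)
      \<le> norm ((T ^^ peak (s i)) (base (s k))) + norm (suminf ?g)"
    by (simp add: norm_triangle_ineq)
  then show ?thesis using g(2) \<open>norm ((T ^^ peak (s i)) (base (s k))) \<le> 1\<close> by simp
qed

lemma glued_span_small_values:
  assumes "v \<in> span (range glued)" and "e > 0"
  shows "\<exists>n. norm ((T ^^ n) v) < e"
proof -
  obtain K c where K: "finite K" "v = (\<Sum>k\<in>K. sm (c k) (glued k))"
    using span_range_eq_sum[OF assms(1)] by blast
  define S where "S = (\<Sum>k\<in>K. norm (c k))"
  define i where "i = (\<Sum>K) + nat \<lceil>3 * S / e\<rceil>"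
  have "k \<le> i" if "k \<in> K" for k
    using member_le_sum[of k K "\<lambda>k. k"] that K(1) unfolding i_def by simp
  then have "norm ((T ^^ trough (s i)) v) \<le> (\<Sum>k\<in>K. norm (c k) * (3 / (real i + 1)))"
    unfolding K(2) iter_sum iter_sm
    by (intro order_trans[OF norm_sum_sm_le] sum_mono mult_left_mono norm_trough_glued) auto
  also have "\<dots> = S * (3 / (real i + 1))" unfolding S_def by (rule sum_distrib_right[symmetric])
  also have "\<dots> < e"
  proof -
    have "3 * S / e \<le> real i" unfolding i_def by linarith
    then show ?thesis using assms(2) by (simp add: field_simps)
  qed
  finally show ?thesis by blast
qed

lemma norm_peak_glued_combination:
  assumes K: "finite K" "k0 \<in> K" and i: "owner i = k0" "\<And>k. k \<in> K \<Longrightarrow> k \<le> i"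
  shows "norm ((T ^^ peak (s i)) (\<Sum>k\<in>K. sm (c k) (glued k)))
    \<ge> norm (c k0) * (real i + 1) - 3 * (\<Sum>k\<in>K. norm (c k))"
proof -
  define X where "X = (T ^^ peak (s i)) (bump (s i))"
  define R where "R k = (T ^^ peak (s i)) (glued k) - (if owner i = k then X else 0)" for k
  have "(T ^^ peak (s i)) (glued k) = R k + (if k0 = k then X else 0)" for k
    unfolding R_def i(1) by simp
  then have "(T ^^ peak (s i)) (\<Sum>k\<in>K. sm (c k) (glued k))
      = (\<Sum>k\<in>K. sm (c k) (R k) + (if k0 = k then sm (c k) X else 0))"
    unfolding iter_sum iter_sm by (auto simp: scale_right_distrib intro!: sum.cong)
  also have "\<dots> = (\<Sum>k\<in>K. sm (c k) (R k)) + sm (c k0) X"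
    using K by (simp add: sum.distrib)
  finally have eq: "(T ^^ peak (s i)) (\<Sum>k\<in>K. sm (c k) (glued k)) = (\<Sum>k\<in>K. sm (c k) (R k)) + sm (c k0) X" .
  have "norm (R k) \<le> 3" if "k \<in> K" for k
    unfolding R_def X_def using norm_peak_glued_diff i(2) that by blast
  then have "norm (\<Sum>k\<in>K. sm (c k) (R k)) \<le> (\<Sum>k\<in>K. norm (c k) * 3)"
    by (intro order_trans[OF norm_sum_sm_le] sum_mono mult_left_mono) auto
  also have "\<dots> = 3 * (\<Sum>k\<in>K. norm (c k))" by (simp add: sum_distrib_left mult.commute)
  finally have "norm (\<Sum>k\<in>K. sm (c k) (R k)) \<le> 3 * (\<Sum>k\<in>K. norm (c k))" .
  moreover have "norm (sm (c k0) X) \<ge> norm (c k0) * (real i + 1)"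
    using adm[of i] unfolding admissible_def norm_sm X_def by (simp add: mult_left_mono)
  ultimately show ?thesis
    unfolding eq using norm_diff_ineq[of "sm (c k0) X" "\<Sum>k\<in>K. sm (c k) (R k)"]
    by (simp add: add.commute)
qed

lemma glued_span_unbounded:
  assumes "v \<in> span (range glued)" and "v \<noteq> 0"
  shows "\<not> bounded_orbit T v"
proof -
  obtain K c where K: "finite K" "v = (\<Sum>k\<in>K. sm (c k) (glued k))"
    using span_range_eq_sum[OF assms(1)] by blast
  obtain k0 where k0: "k0 \<in> K" "c k0 \<noteq> 0"
    using assms(2) unfolding K(2) by (metis (no_types, lifting) scale_zero_left sum.neutral)
  define S where "S = (\<Sum>k\<in>K. norm (c k))"
  have "\<exists>n. norm ((T ^^ n) v) > B" for B
  proof -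
    \<comment> \<open>Stage \<open>i\<close> belongs to \<open>k0\<close>, comes after every index in \<open>K\<close>, and is late enough to beat \<open>B\<close>.\<close>
    define j where "j = (\<Sum>K) + nat \<lceil>(\<bar>B\<bar> + 3 * S) / norm (c k0)\<rceil>"
    define i where "i = prod_encode (k0, j)"
    have "j \<le> i" unfolding i_def by (rule le_prod_encode_2)
    then have i: "(\<bar>B\<bar> + 3 * S) / norm (c k0) \<le> real i" "\<And>k. k \<in> K \<Longrightarrow> k \<le> i"
      using member_le_sum[of _ K "\<lambda>k. k"] K(1) unfolding j_def by (linarith, fastforce)
    have pos: "norm (c k0) > 0" using k0(2) by simp
    then have "\<bar>B\<bar> + 3 * S \<le> real i * norm (c k0)" using i(1) by (simp add: divide_le_eq)
    moreover have "norm (c k0) * (real i + 1) = real i * norm (c k0) + norm (c k0)"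
      by (simp add: algebra_simps)
    moreover have "norm ((T ^^ peak (s i)) v) \<ge> norm (c k0) * (real i + 1) - 3 * S"
      unfolding K(2) S_def using K(1) k0(1) i(2) by (intro norm_peak_glued_combination) (auto simp: i_def)
    ultimately show ?thesis using pos by (intro exI[of _ "peak (s i)"]) linarith
  qed
  then show ?thesis unfolding bounded_orbit_def by (meson not_le)
qed

end

theorem irregular_sequence_if_not_uniformly_bounded:
  fixes t :: "nat \<Rightarrow> 'a" and r :: "nat \<Rightarrow> real"
  assumes unif: "\<forall>C. \<exists>m x. norm ((T ^^ p m) x) > C * norm x"
    and r: "\<And>k. 0 < r k \<and> r k \<le> 1"
  shows "\<exists>y. (\<forall>k. dist (y k) (t k) < r k) \<and> (\<forall>v\<in>span (range y). v \<noteq> 0 \<longrightarrow> irregular_vector T v)"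
proof -
  have "\<exists>s. \<forall>i. admissible t r i s"
    by (rule dependent_choice_local) (fact admissible_local, use admissible_extend[OF unif] r in blast)
  then obtain s where s: "\<And>i. admissible t r i s" by blast
  have "irregular_vector T v" if "v \<in> span (range (glued s))" "v \<noteq> 0" for v
    by (rule irregular_vectorI[OF T_zero glued_span_small_values[OF r s that(1)]
          glued_span_unbounded[OF r s that]])
  then show ?thesis using dist_glued[OF r s] by blast
qed


section \<open>Dense irregular manifolds\<close>

theorem exists_irregular_sequence:
  fixes t :: "nat \<Rightarrow> 'a" and r :: "nat \<Rightarrow> real"
  assumes r: "\<And>k. 0 < r k \<and> r k \<le> 1"
  shows "\<exists>y. (\<forall>k. dist (y k) (t k) < r k) \<and> (\<forall>v\<in>span (range y). v \<noteq> 0 \<longrightarrow> irregular_vector T v)"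
proof (cases "\<exists>C. \<forall>m x. norm ((T ^^ p m) x) \<le> C * norm x")
  case True
  then show ?thesis using irregular_sequence_if_uniformly_bounded r by blast
next
  case False
  then have "\<forall>C. \<exists>m x. norm ((T ^^ p m) x) > C * norm x" by (meson not_le)
  then show ?thesis using irregular_sequence_if_not_uniformly_bounded r by blast
qed

theorem dense_irregular_subspace:
  assumes "separable_space (euclidean :: 'a topology)"
  shows "\<exists>Y. closure Y = UNIV \<and> subspace Y \<and> (\<forall>y\<in>Y. y \<noteq> 0 \<longrightarrow> irregular_vector T y)"
proof -
  obtain D :: "'a set" where D: "countable D" "closure D = UNIV"
    using assms unfolding separable_space_def by (auto simp: euclidean_closure_of)
  then have "D \<times> (UNIV :: nat set) \<noteq> {}" by auto
  \<comment> \<open>Enumerate all pairs of a point of \<open>D\<close> and a radius \<open>1 / (j + 1)\<close>.\<close>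
  define g where "g = from_nat_into (D \<times> (UNIV :: nat set))"
  have g: "g ` UNIV = D \<times> UNIV"
    unfolding g_def using D(1) \<open>D \<times> UNIV \<noteq> {}\<close> by (simp add: range_from_nat_into)
  define t where "t k = fst (g k)" for k
  define r where "r k = 1 / (real (snd (g k)) + 1)" for k
  have "0 < r k \<and> r k \<le> 1" for k unfolding r_def by (simp add: divide_le_eq)
  then obtain y where y: "\<And>k. dist (y k) (t k) < r k"
      "\<forall>v\<in>span (range y). v \<noteq> 0 \<longrightarrow> irregular_vector T v"
    using exists_irregular_sequence[of r t] by blast
  have "x \<in> closure (span (range y))" for x
    unfolding closure_approachable
  proof (intro allI impI)
    fix e :: real assume "e > 0"
    then obtain d where d: "d \<in> D" "dist d x < e / 2"
      using D(2) by (metis UNIV_I closure_approachable half_gt_zero)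
    obtain j :: nat where j: "1 / (real j + 1) < e / 2"
      using \<open>e > 0\<close> by (metis half_gt_zero nat_approx_posE of_nat_Suc add.commute)
    obtain k where "g k = (d, j)" using g d(1) by (metis SigmaI UNIV_I imageE)
    then have "dist (y k) d < e / 2" using y(1)[of k] j unfolding t_def r_def by simp
    then have "dist (y k) x < e" using d(2) dist_triangle[of "y k" x d] by linarith
    moreover have "y k \<in> span (range y)" by (intro span_base) auto
    ultimately show "\<exists>z\<in>span (range y). dist z x < e" by blast
  qed
  then show ?thesis using y(2) by (intro exI[of _ "span (range y)"]) auto
qed

end

lemma dense_scrambled_set_imp_dense_vanishing:
  fixes T :: "'a::real_normed_vector \<Rightarrow> 'a"
  assumes "bounded_linear T" and "closure S = UNIV" and "unif_LY_scrambled T S"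
  shows "\<exists>p. closure {x. (\<lambda>m. (T ^^ p m) x) \<longlonglongrightarrow> 0} = UNIV \<and> (\<exists>u. \<not> bounded_orbit T u)"
proof -
  obtain x0 x1 where x01: "x0 \<in> S" "x1 \<in> S" "x0 \<noteq> x1"
    using assms(3) unfolding unif_LY_scrambled_def by blast
  obtain p q :: "nat \<Rightarrow> nat" where pq: "\<forall>x\<in>S. \<forall>y\<in>S. x \<noteq> y \<longrightarrow>
      ((\<lambda>n. norm ((T ^^ p n) x - (T ^^ p n) y)) \<longlonglongrightarrow> 0) \<and>
      filterlim (\<lambda>n. norm ((T ^^ q n) x - (T ^^ q n) y)) at_top sequentially"
    using assms(3) unfolding unif_LY_scrambled_def by blast
  note iter_diff = linear_simps(2)[OF bounded_linear_funpow[OF assms(1)]]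
  \<comment> \<open>Translating \<open>S\<close> by \<open>-x0\<close> gives a dense set of vectors whose \<open>p\<close>-iterates tend to \<open>0\<close>.\<close>
  have "(\<lambda>m. (T ^^ p m) (s - x0)) \<longlonglongrightarrow> 0" if "s \<in> S" for s
  proof (cases "s = x0")
    case False
    then show ?thesis
      using pq that x01(1) by (simp add: iter_diff tendsto_norm_zero_iff)
  qed (simp add: linear_simps(3)[OF bounded_linear_funpow[OF assms(1)]])
  then have "(\<lambda>x. x - x0) ` S \<subseteq> {x. (\<lambda>m. (T ^^ p m) x) \<longlonglongrightarrow> 0}" by auto
  moreover have "closure ((\<lambda>x. x - x0) ` S) = UNIV"
    using assms(2) closure_translation_subtract[of x0 S] surjI[of "\<lambda>x. x - x0" "\<lambda>x. x + x0"] by simp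
  ultimately have "closure {x. (\<lambda>m. (T ^^ p m) x) \<longlonglongrightarrow> 0} = UNIV"
    using closure_mono by blast
  moreover have "\<not> bounded_orbit T (x1 - x0)"
  proof
    assume "bounded_orbit T (x1 - x0)"
    then obtain K where "\<And>n. norm ((T ^^ n) (x1 - x0)) \<le> K" unfolding bounded_orbit_def by blast
    moreover have "x1 \<noteq> x0" using x01(3) by simp
    then have "filterlim (\<lambda>n. norm ((T ^^ q n) x1 - (T ^^ q n) x0)) at_top sequentially"
      using pq x01(1,2) by blast
    then have "eventually (\<lambda>n. norm ((T ^^ q n) x1 - (T ^^ q n) x0) > K) sequentially"
      by (simp add: filterlim_at_top_dense)
    then obtain n where "norm ((T ^^ q n) x1 - (T ^^ q n) x0) > K"
      by (auto simp: eventually_sequentially)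
    ultimately show False by (metis iter_diff not_le)
  qed
  ultimately show ?thesis by blast
qed

theorem dense_irregular_subspace_if_densely_unif_LY_chaotic:
  fixes sm :: "'k::{real_normed_field,heine_borel} \<Rightarrow> 'a::banach \<Rightarrow> 'a" and T :: "'a \<Rightarrow> 'a"
  assumes "operator_over sm T"
    and "separable_space (euclidean :: 'a topology)"
    and "densely_unif_LY_chaotic T"
  shows "\<exists>Y. closure Y = UNIV \<and> module.subspace sm Y \<and> (\<forall>y\<in>Y. y \<noteq> 0 \<longrightarrow> irregular_vector T y)"
proof -
  interpret operator_over sm T by fact
  obtain S where "closure S = UNIV" "unif_LY_scrambled T S"
    using assms(3) unfolding densely_unif_LY_chaotic_def by blast
  then obtain p where "closure {x. (\<lambda>m. (T ^^ p m) x) \<longlonglongrightarrow> 0} = UNIV" "\<exists>u. \<not> bounded_orbit T u"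
    using dense_scrambled_set_imp_dense_vanishing[OF bounded_linear_T] by blast
  then interpret li_yorke_operator sm T p by unfold_locales
  show ?thesis by (rule dense_irregular_subspace[OF assms(2)])
qed

theorem corollary3p6:
  fixes T :: "'a::banach \<Rightarrow> 'a"
    and S :: "'b::banach \<Rightarrow> 'b" and sc :: "complex \<Rightarrow> 'b \<Rightarrow> 'b"
  shows "(separable_space (euclidean :: 'a topology) \<and> bounded_linear T \<and>
            densely_unif_LY_chaotic T
          \<longrightarrow> (\<exists>Y. closure Y = UNIV \<and> irregular_manifold T Y))
       \<and> (complex_normed_structure sc \<and> separable_space (euclidean :: 'b topology) \<and>
            bounded_linear S \<and> (\<forall>c x. S (sc c x) = sc c (S x)) \<and>
            densely_unif_LY_chaotic S
          \<longrightarrow> (\<exists>Y. closure Y = UNIV \<and> irregular_manifold_C sc S Y))"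
proof (intro conjI impI)
  assume H: "separable_space (euclidean :: 'a topology) \<and> bounded_linear T \<and> densely_unif_LY_chaotic T"
  have "operator_over scaleR T"
    by (intro operator_over.intro banach_over.intro banach_over_axioms.intro operator_over_axioms.intro
        real_vector.module_axioms) (use H in \<open>auto simp: linear_simps\<close>)
  then show "\<exists>Y. closure Y = UNIV \<and> irregular_manifold T Y"
    using dense_irregular_subspace_if_densely_unif_LY_chaotic H
    unfolding irregular_manifold_def subspace_raw_def by blast
next
  assume H: "complex_normed_structure sc \<and> separable_space (euclidean :: 'b topology) \<and>
      bounded_linear S \<and> (\<forall>c x. S (sc c x) = sc c (S x)) \<and> densely_unif_LY_chaotic S"
  then have "operator_over sc S"
    unfolding complex_normed_structure_def operator_over_def operator_over_axioms_def
      banach_over_def banach_over_axioms_def by auto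
  then show "\<exists>Y. closure Y = UNIV \<and> irregular_manifold_C sc S Y"
    using dense_irregular_subspace_if_densely_unif_LY_chaotic H
    unfolding irregular_manifold_C_def by blast
qed

end
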